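(* Suppose $\mathit{Act}=\{a\}$. Then the finite axiom system $\mathcal{E}_{v,1}'=\mathcal{E}_v'\cup\{V_1\}$, where ($V_1$) is $x=x+a.x$, is complete for $\simeq$ over open monitors: for all monitors $m,n$, if $m\simeq n$ then $\mathcal{E}_{v,1}'\vdash m=n$. Hence verdict equivalence has a finite equational basis when $\mathit{Act}=\{a\}$.
   Context: Monitors: terms $m,n ::= v \mid a.m \mid m+n \mid x$ over the action set $\mathit{Act}$ and variables $x$, verdicts $v::=\mathit{end}\mid\mathit{yes}\mid\mathit{no}$. Semantics: $\xrightarrow{\alpha}$ ($\alpha\in\mathit{Act}\cup\{\tau\}$) is the least relation with $a.m\xrightarrow{a}m$; $m\xrightarrow{\alpha}m'$ implies $m+n\xrightarrow{\alpha}m'$ and $n+m\xrightarrow{\alpha}m'$; $v\xrightarrow{\alpha}v$ for verdicts $v$. Weak transitions: $m\xRightarrow{\varepsilon}m'$ iff $m(\xrightarrow{\tau})^*m'$; $m\xRightarrow{a}m'$ iff $m\xRightarrow{\varepsilon}\xrightarrow{a}\xRightarrow{\varepsilon}m'$; $m\xRightarrow{as'}m'$ ($s'\ne\varepsilon$) iff $m\xRightarrow{a}m_1\xRightarrow{s'}m'$. For closed $m$, $L_a(m)=\{s\mid m\xRightarrow{s}\mathit{yes}\}$, $L_r(m)=\{s\mid m\xRightarrow{s}\mathit{no}\}$; $m\simeq n$ iff $L_a,L_r$ coincide for closed terms, and iff $\sigma(m)\simeq\sigma(n)$ for all closed substitutions $\sigma$ for open terms. $\mathcal{E}\vdash m=n$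 denotes derivability by reflexivity, symmetry, transitivity, substitution and congruence for $a.\_$ and $+$. $\mathcal{E}_v'$ consists of (A1) $x+y=y+x$; (A2) $x+(y+z)=(x+y)+z$; (A3) $x+x=x$; (A4) $x+\mathit{end}=x$; for each $a\in\mathit{Act}$: ($E_a$) $a.\mathit{end}=\mathit{end}$; ($Y_a$) $\mathit{yes}=\mathit{yes}+a.\mathit{yes}$; ($N_a$) $\mathit{no}=\mathit{no}+a.\mathit{no}$; ($D_a$) $a.(x+y)=a.x+a.y$; and (O1) $\mathit{yes}+\mathit{no}=\mathit{yes}+\mathit{no}+x$. *)

theory Defs
  imports Main
begin

datatype verdict = End | Yes | No

datatype 'a mon =
    Verd verdict
  | Pre 'a "'a mon"
  | Plus "'a mon" "'a mon"
  | Var nat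

datatype 'a lab = Act 'a | Tau

inductive step :: "'a mon \<Rightarrow> 'a lab \<Rightarrow> 'a mon \<Rightarrow> bool" where
  pre:   "step (Pre a m) (Act a) m"
| suml:  "step m \<alpha> m' \<Longrightarrow> step (Plus m n) \<alpha> m'"
| sumr:  "step m \<alpha> m' \<Longrightarrow> step (Plus n m) \<alpha> m'"
| verd:  "step (Verd v) \<alpha> (Verd v)"

definition tau_star :: "'a mon \<Rightarrow> 'a mon \<Rightarrow> bool" where
  "tau_star = (\<lambda>m m'. step m Tau m')\<^sup>*\<^sup>*"

fun weak :: "'a mon \<Rightarrow> 'a list \<Rightarrow> 'a mon \<Rightarrow> bool" where
  "weak m [] m' = tau_star m m'"
| "weak m (a # s) m' =
     (\<exists>m1 m2 m3. tau_star m m1 \<and> step m1 (Act a) m2 \<and> tau_star m2 m3 \<and> weak m3 s m')"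

definition Lacc :: "'a mon \<Rightarrow> 'a list set" where
  "Lacc m = {s. weak m s (Verd Yes)}"

definition Lrej :: "'a mon \<Rightarrow> 'a list set" where
  "Lrej m = {s. weak m s (Verd No)}"

fun vars :: "'a mon \<Rightarrow> nat set" where
  "vars (Verd v) = {}"
| "vars (Pre a m) = vars m"
| "vars (Plus m n) = vars m \<union> vars n"
| "vars (Var x) = {x}"

definition closed :: "'a mon \<Rightarrow> bool" where
  "closed m \<longleftrightarrow> vars m = {}"

fun subst :: "(nat \<Rightarrow> 'a mon) \<Rightarrow> 'a mon \<Rightarrow> 'a mon" where
  "subst \<sigma> (Verd v) = Verd v"
| "subst \<sigma> (Pre a m) = Pre a (subst \<sigma> m)"
| "subst \<sigma> (Plus m n) = Plus (subst \<sigma> m) (subst \<sigma> n)"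
| "subst \<sigma> (Var x) = \<sigma> x"

definition closed_equiv :: "'a mon \<Rightarrow> 'a mon \<Rightarrow> bool" where
  "closed_equiv m n \<longleftrightarrow> Lacc m = Lacc n \<and> Lrej m = Lrej n"

definition mon_equiv :: "'a mon \<Rightarrow> 'a mon \<Rightarrow> bool" where
  "mon_equiv m n \<longleftrightarrow>
     (\<forall>\<sigma>. (\<forall>x. closed (\<sigma> x)) \<longrightarrow> closed_equiv (subst \<sigma> m) (subst \<sigma> n))"

inductive derivable :: "('a mon \<times> 'a mon) set \<Rightarrow> 'a mon \<Rightarrow> 'a mon \<Rightarrow> bool"
  for E where
  ax:    "(l, r) \<in> E \<Longrightarrow> derivable E l r"
| refl:  "derivable E m m"
| sym:   "derivable E m n \<Longrightarrow> derivable E n m"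
| trans: "derivable E m n \<Longrightarrow> derivable E n k \<Longrightarrow> derivable E m k"
| subst: "derivable E m n \<Longrightarrow> derivable E (subst \<sigma> m) (subst \<sigma> n)"
| cpre:  "derivable E m n \<Longrightarrow> derivable E (Pre a m) (Pre a n)"
| cplus: "derivable E m n \<Longrightarrow> derivable E m' n' \<Longrightarrow> derivable E (Plus m m') (Plus n n')"

abbreviation "vx \<equiv> Var 0"
abbreviation "vy \<equiv> Var 1"
abbreviation "vz \<equiv> Var 2"

definition Ev' :: "('a mon \<times> 'a mon) set" where
  "Ev' =
     {(Plus vx vy, Plus vy vx),
      (Plus vx (Plus vy vz), Plus (Plus vx vy) vz),
      (Plus vx vx, vx),
      (Plus vx (Verd End), vx),
      (Plus (Verd Yes) (Verd No), Plus (Plus (Verd Yes) (Verd No)) vx)}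
   \<union> (\<Union>a. {(Pre a (Verd End), Verd End),
             (Verd Yes, Plus (Verd Yes) (Pre a (Verd Yes))),
             (Verd No, Plus (Verd No) (Pre a (Verd No))),
             (Pre a (Plus vx vy), Plus (Pre a vx) (Pre a vy))})"

definition Ev1' :: "'a \<Rightarrow> ('a mon \<times> 'a mon) set" where
  "Ev1' a = Ev' \<union> {(vx, Plus vx (Pre a vx))}"

end

theory Submission
  imports Defs
begin

text \<open>Over a single action a closed monitor is determined, up to \<open>\<simeq>\<close>, by the least depths at
which \<open>yes\<close> and \<open>no\<close> occur in it: the trace \<open>a\<^sup>k\<close> is accepted iff \<open>yes\<close> occurs under at most
\<open>k\<close> prefixes. Instantiating the variables of an open monitor by verdicts thus shows that if
\<open>m \<simeq> n\<close>, every verdict or variable occurring in \<open>n\<close> at depth \<open>d\<close> is matched in \<open>m\<close> at depth at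
most \<open>d\<close>, or is overruled by occurrences of both \<open>yes\<close> and \<open>no\<close> in \<open>m\<close> at depth at most \<open>d\<close>.
Equationally, \<open>V\<^sub>1\<close> lets \<open>m\<close> absorb deeper copies of its own subterms and \<open>O1\<close> lets
\<open>yes + no\<close> absorb anything, so \<open>m = m + n\<close>; by symmetry \<open>n = n + m\<close>, whence \<open>m = n\<close>.\<close>

inductive occurs_at :: "'a mon \<Rightarrow> nat \<Rightarrow> 'a mon \<Rightarrow> bool" where
  Verd: "occurs_at (Verd v) 0 (Verd v)"
| Var: "occurs_at (Var x) 0 (Var x)"
| Pre: "occurs_at m d u \<Longrightarrow> occurs_at (Pre b m) (Suc d) u"
| PlusL: "occurs_at m d u \<Longrightarrow> occurs_at (Plus m n) d u"
| PlusR: "occurs_at n d u \<Longrightarrow> occurs_at (Plus m n) d u"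

inductive_simps occurs_at_simps [simp]:
  "occurs_at (Verd w) d u" "occurs_at (Var x) d u" "occurs_at (Pre b m) d u" "occurs_at (Plus m n) d u"

definition occurs_upto :: "'a mon \<Rightarrow> nat \<Rightarrow> 'a mon \<Rightarrow> bool" where
  "occurs_upto m k u \<longleftrightarrow> (\<exists>d\<le>k. occurs_at m d u)"

lemma occurs_at_imp_occurs_upto: "occurs_at m d u \<Longrightarrow> d \<le> k \<Longrightarrow> occurs_upto m k u"
  unfolding occurs_upto_def by blast

lemma occurs_at_atom: "occurs_at m d u \<Longrightarrow> (\<exists>v. u = Verd v) \<or> (\<exists>x. u = Var x)"
  by (induction rule: occurs_at.induct) auto

lemma occurs_at_subst:
  "occurs_at t d\<^sub>1 w \<Longrightarrow> occurs_at (subst \<sigma> w) d\<^sub>2 u \<Longrightarrow> occurs_at (subst \<sigma> t) (d\<^sub>1 + d\<^sub>2) u"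
  by (induction rule: occurs_at.induct) (auto intro: occurs_at.intros)

lemma occurs_at_subst_cases:
  "occurs_at (subst \<sigma> t) d u \<Longrightarrow>
     occurs_at t d u \<or> (\<exists>x d\<^sub>1 d\<^sub>2. occurs_at t d\<^sub>1 (Var x) \<and> occurs_at (\<sigma> x) d\<^sub>2 u \<and> d = d\<^sub>1 + d\<^sub>2)"
proof (induction t arbitrary: d)
  case (Pre b t)
  then obtain d' where "d = Suc d'" "occurs_at (subst \<sigma> t) d' u"
    by auto
  with Pre.IH[of d'] show ?case
    by (metis add_Suc occurs_at.Pre)
next
  case (Plus t\<^sub>1 t\<^sub>2)
  then show ?case
    by simp meson
qed auto

lemma step_Tau_imp_verdict: "step t l t' \<Longrightarrow> l = Tau \<Longrightarrow> \<exists>w. t' = Verd w \<and> occurs_at t 0 (Verd w)"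
  by (induction rule: step.induct) (auto intro: occurs_at.intros)

lemma tau_star_occurs_at: "tau_star t t' \<Longrightarrow> occurs_at t' d u \<Longrightarrow> occurs_at t d u"
  unfolding tau_star_def
proof (induction rule: converse_rtranclp_induct)
  case (step t t'')
  then show ?case using step_Tau_imp_verdict[of t Tau t''] by auto
qed

lemma step_occurs_at: "step t l t' \<Longrightarrow> occurs_at t' d u \<Longrightarrow> \<exists>d'\<le>Suc d. occurs_at t d' u"
  by (induction arbitrary: d rule: step.induct) (auto intro: occurs_at.intros)

lemma weak_imp_occurs_upto: "weak t s (Verd v) \<Longrightarrow> occurs_upto t (length s) (Verd v)"
proof (induction s arbitrary: t)
  case Nil
  then show ?case
    using tau_star_occurs_at occurs_at.Verd by (fastforce simp: occurs_upto_def)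
next
  case (Cons b s)
  then obtain t\<^sub>1 t\<^sub>2 t\<^sub>3 where
    t: "tau_star t t\<^sub>1" "step t\<^sub>1 (Act b) t\<^sub>2" "tau_star t\<^sub>2 t\<^sub>3" "weak t\<^sub>3 s (Verd v)"
    by auto
  obtain d where "d \<le> length s" "occurs_at t\<^sub>3 d (Verd v)"
    using Cons.IH[OF t(4)] unfolding occurs_upto_def by blast
  then obtain d' where "d' \<le> Suc d" "occurs_at t\<^sub>1 d' (Verd v)"
    using step_occurs_at[OF t(2)] tau_star_occurs_at[OF t(3)] by blast
  moreover have "d' \<le> length (b # s)"
    using \<open>d' \<le> Suc d\<close> \<open>d \<le> length s\<close> by simp
  ultimately show ?case
    using tau_star_occurs_at[OF t(1)] unfolding occurs_upto_def by blast
qed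

lemma occurs_at_0_step: "occurs_at t 0 (Verd v) \<Longrightarrow> step t l (Verd v)"
  by (induction t) (auto intro: step.intros)

lemma occurs_at_Suc_step: "occurs_at t (Suc d) u \<Longrightarrow> \<exists>b t'. step t (Act b) t' \<and> occurs_at t' d u"
  by (induction t) (auto intro: step.intros)

lemma tau_star_refl: "tau_star t t"
  unfolding tau_star_def by simp

lemma tau_star_trans: "tau_star t t' \<Longrightarrow> tau_star t' t'' \<Longrightarrow> tau_star t t''"
  unfolding tau_star_def by (rule rtranclp_trans)

lemma tau_star_weak: "tau_star t t' \<Longrightarrow> weak t' s u \<Longrightarrow> weak t s u"
  by (cases s) (simp_all, meson tau_star_trans, meson tau_star_trans)

lemma weak_Verd: "weak (Verd v) s (Verd v)"
  by (induction s) (auto intro: tau_star_refl step.verd)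

lemma occurs_at_imp_weak:
  assumes single: "(UNIV :: 'a set) = {a}"
  shows "occurs_at (t :: 'a mon) d (Verd v) \<Longrightarrow> d \<le> length s \<Longrightarrow> weak t s (Verd v)"
proof (induction d arbitrary: t s)
  case 0
  then have "tau_star t (Verd v)"
    unfolding tau_star_def by (simp add: occurs_at_0_step r_into_rtranclp)
  then show ?case
    using tau_star_weak weak_Verd by blast
next
  case (Suc d)
  then obtain c s' where s: "s = c # s'" "d \<le> length s'"
    by (cases s) auto
  obtain b t' where "step t (Act b) t'" "occurs_at t' d (Verd v)"
    using occurs_at_Suc_step Suc.prems(1) by blast
  moreover have "b = c"
    using single by (metis UNIV_I singletonD)
  ultimately have "step t (Act c) t'" "weak t' s' (Verd v)"
    using Suc.IH s by auto
  then show ?case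
    unfolding s by (simp only: weak.simps) (blast intro: tau_star_refl)
qed

lemma weak_Verd_iff:
  assumes "(UNIV :: 'a set) = {a}"
  shows "weak (t :: 'a mon) s (Verd v) \<longleftrightarrow> occurs_upto t (length s) (Verd v)"
  using weak_imp_occurs_upto occurs_at_imp_weak[OF assms] unfolding occurs_upto_def by metis

lemma closed_equiv_weak:
  "closed_equiv m n \<Longrightarrow> v \<noteq> End \<Longrightarrow> weak m s (Verd v) \<longleftrightarrow> weak n s (Verd v)"
  unfolding closed_equiv_def Lacc_def Lrej_def by (cases v) auto

lemma mon_equiv_sym: "mon_equiv m n \<Longrightarrow> mon_equiv n m"
  unfolding mon_equiv_def closed_equiv_def by auto

lemma mon_equiv_subst_occurs_upto:
  assumes "(UNIV :: 'a set) = {a}" "mon_equiv m (n :: 'a mon)" "\<And>x. closed (\<sigma> x)" "v \<noteq> End"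
    and "occurs_at (subst \<sigma> n) d (Verd v)"
  shows "occurs_upto (subst \<sigma> m) d (Verd v)"
proof -
  have "closed_equiv (subst \<sigma> m) (subst \<sigma> n)"
    using assms(2,3) unfolding mon_equiv_def by blast
  moreover have "weak (subst \<sigma> n) (replicate d a) (Verd v)"
    using weak_Verd_iff[OF assms(1)] occurs_at_imp_occurs_upto[OF assms(5)] by simp
  ultimately have "weak (subst \<sigma> m) (replicate d a) (Verd v)"
    using closed_equiv_weak assms(4) by blast
  then show ?thesis
    using weak_Verd_iff[OF assms(1)] by simp
qed

text \<open>The two substitutions below send variables to verdicts, so a verdict can only occur in the
instance of \<open>m\<close> at the depth of the variable it replaces.\<close>

lemma mon_equiv_occurs_Verd:
  assumes "(UNIV :: 'a set) = {a}" "mon_equiv m (n :: 'a mon)" "v \<noteq> End"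
    and "occurs_at n d (Verd v)"
  shows "occurs_upto m d (Verd v)"
proof -
  let ?\<sigma> = "\<lambda>_. Verd End :: 'a mon"
  have "occurs_at (subst ?\<sigma> n) d (Verd v)"
    using occurs_at_subst[OF assms(4), of ?\<sigma> 0] by simp
  then have "occurs_upto (subst ?\<sigma> m) d (Verd v)"
    using mon_equiv_subst_occurs_upto[OF assms(1,2) _ assms(3)] by (simp add: closed_def)
  then obtain d' where "d' \<le> d" "occurs_at (subst ?\<sigma> m) d' (Verd v)"
    unfolding occurs_upto_def by blast
  then show ?thesis
    using occurs_at_subst_cases[of ?\<sigma> m d' "Verd v"] assms(3) by (auto simp: occurs_upto_def)
qed

lemma mon_equiv_occurs_Var:
  assumes "(UNIV :: 'a set) = {a}" "mon_equiv m (n :: 'a mon)" "v \<noteq> End"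
    and "occurs_at n d (Var x)"
  shows "occurs_upto m d (Verd v) \<or> occurs_upto m d (Var x)"
proof -
  define \<sigma> :: "nat \<Rightarrow> 'a mon" where "\<sigma> y = (if y = x then Verd v else Verd End)" for y
  have "occurs_at (subst \<sigma> n) d (Verd v)"
    using occurs_at_subst[OF assms(4), of \<sigma> 0] by (simp add: \<sigma>_def)
  then have "occurs_upto (subst \<sigma> m) d (Verd v)"
    using mon_equiv_subst_occurs_upto[OF assms(1,2) _ assms(3)] by (simp add: closed_def \<sigma>_def)
  then obtain d' where "d' \<le> d" "occurs_at (subst \<sigma> m) d' (Verd v)"
    unfolding occurs_upto_def by blast
  with occurs_at_subst_cases[of \<sigma> m d' "Verd v"] show ?thesis
    using assms(3) by (auto simp: occurs_upto_def \<sigma>_def split: if_splits)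
qed

text \<open>An occurrence of \<open>u\<close> at depth \<open>k\<close> is covered by \<open>m\<close> if \<open>m\<close> can absorb it: \<open>end\<close> vanishes,
a shallower copy of \<open>u\<close> in \<open>m\<close> is pushed down by \<open>V\<^sub>1\<close>, and \<open>yes + no\<close> absorbs everything by \<open>O1\<close>.\<close>

definition covers :: "'a mon \<Rightarrow> nat \<Rightarrow> 'a mon \<Rightarrow> bool" where
  "covers m k u \<longleftrightarrow>
     u = Verd End \<or> occurs_upto m k u \<or> occurs_upto m k (Verd Yes) \<and> occurs_upto m k (Verd No)"

lemma mon_equiv_covers:
  assumes "(UNIV :: 'a set) = {a}" "mon_equiv m (n :: 'a mon)" "occurs_at n d u"
  shows "covers m d u"
  using occurs_at_atom[OF assms(3)]
proof (elim disjE exE)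
  fix w assume "u = Verd w"
  then show ?thesis
    using mon_equiv_occurs_Verd[OF assms(1,2)] assms(3) by (cases w) (auto simp: covers_def)
next
  fix x assume "u = Var x"
  then show ?thesis
    using mon_equiv_occurs_Var[OF assms(1,2), of Yes] mon_equiv_occurs_Var[OF assms(1,2), of No] assms(3)
    by (auto simp: covers_def)
qed

declare derivable.trans [trans]

locale monitor_axioms =
  fixes E :: "('a mon \<times> 'a mon) set"
  assumes Ev'_subset: "Ev' \<subseteq> E"
begin

lemma Ev'_instance: "(l, r) \<in> Ev' \<Longrightarrow> derivable E (subst \<sigma> l) (subst \<sigma> r)"
  using Ev'_subset by (blast intro: derivable.subst derivable.ax)

lemma Plus_commute: "derivable E (Plus p q) (Plus q p)"
  using Ev'_instance[of "Plus vx vy" "Plus vy vx" "(!) [p, q]"] by (simp add: Ev'_def)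

lemma Plus_assoc: "derivable E (Plus p (Plus q r)) (Plus (Plus p q) r)"
  using Ev'_instance[of "Plus vx (Plus vy vz)" "Plus (Plus vx vy) vz" "(!) [p, q, r]"]
  by (simp add: Ev'_def)

lemma Plus_idem: "derivable E (Plus p p) p"
  using Ev'_instance[of "Plus vx vx" vx "(!) [p]"] by (simp add: Ev'_def)

lemma Plus_End: "derivable E (Plus p (Verd End)) p"
  using Ev'_instance[of "Plus vx (Verd End)" vx "(!) [p]"] by (simp add: Ev'_def)

lemma Yes_No_absorbs: "derivable E (Plus (Verd Yes) (Verd No)) (Plus (Plus (Verd Yes) (Verd No)) p)"
  using Ev'_instance[of "Plus (Verd Yes) (Verd No)" "Plus (Plus (Verd Yes) (Verd No)) vx" "(!) [p]"]
  by (simp add: Ev'_def)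

lemma Pre_End: "derivable E (Pre b (Verd End)) (Verd End)"
  using Ev'_instance[of "Pre b (Verd End)" "Verd End" Var] by (auto simp: Ev'_def)

lemma Pre_Plus: "derivable E (Pre b (Plus p q)) (Plus (Pre b p) (Pre b q))"
  using Ev'_instance[of "Pre b (Plus vx vy)" "Plus (Pre b vx) (Pre b vy)" "(!) [p, q]"]
  by (auto simp: Ev'_def)

lemma funpow_Pre_Plus:
  "derivable E ((Pre b ^^ k) (Plus p q)) (Plus ((Pre b ^^ k) p) ((Pre b ^^ k) q))"
proof (induction k)
  case 0
  show ?case by (simp add: derivable.refl)
next
  case (Suc k)
  then show ?case
    using derivable.trans[OF derivable.cpre Pre_Plus] by simp
qed

lemma funpow_Pre_End: "derivable E ((Pre b ^^ k) (Verd End)) (Verd End)"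
  by (induction k) (auto intro: derivable.refl derivable.trans derivable.cpre Pre_End)

text \<open>The order of the join semilattice induced by \<open>+\<close>: \<open>absorbs m t\<close> means \<open>t \<le> m\<close>.\<close>

definition absorbs :: "'a mon \<Rightarrow> 'a mon \<Rightarrow> bool" where
  "absorbs m t \<longleftrightarrow> derivable E m (Plus m t)"

lemma absorbs_refl: "absorbs m m"
  unfolding absorbs_def by (rule derivable.sym[OF Plus_idem])

lemma absorbs_End: "absorbs m (Verd End)"
  unfolding absorbs_def by (rule derivable.sym[OF Plus_End])

lemma absorbs_Plus: "absorbs m t\<^sub>1 \<Longrightarrow> absorbs m t\<^sub>2 \<Longrightarrow> absorbs m (Plus t\<^sub>1 t\<^sub>2)"
  unfolding absorbs_def
  by (meson derivable.trans derivable.cplus derivable.refl derivable.sym Plus_assoc)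

lemma absorbs_trans:
  assumes "absorbs m s" "absorbs s t"
  shows "absorbs m t"
proof -
  have "derivable E m (Plus m (Plus s t))"
    using assms unfolding absorbs_def by (meson derivable.trans derivable.cplus derivable.refl)
  also have "derivable E \<dots> (Plus (Plus m s) t)"
    by (rule Plus_assoc)
  also have "derivable E \<dots> (Plus m t)"
    using assms(1) unfolding absorbs_def by (meson derivable.cplus derivable.refl derivable.sym)
  finally show ?thesis
    unfolding absorbs_def .
qed

lemma absorbs_derivable_left: "derivable E m m' \<Longrightarrow> absorbs m t \<Longrightarrow> absorbs m' t"
  unfolding absorbs_def by (meson derivable.trans derivable.cplus derivable.refl derivable.sym)

lemma absorbs_derivable_right: "derivable E t t' \<Longrightarrow> absorbs m t' \<Longrightarrow> absorbs m t"
  unfolding absorbs_def by (meson derivable.trans derivable.cplus derivable.refl derivable.sym)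

lemma absorbs_PlusL:
  assumes "absorbs m t"
  shows "absorbs (Plus m n) t"
proof -
  have "derivable E (Plus m n) (Plus (Plus m t) n)"
    using assms unfolding absorbs_def by (meson derivable.cplus derivable.refl)
  also have "derivable E \<dots> (Plus m (Plus t n))"
    by (rule derivable.sym[OF Plus_assoc])
  also have "derivable E \<dots> (Plus m (Plus n t))"
    by (rule derivable.cplus[OF derivable.refl Plus_commute])
  also have "derivable E \<dots> (Plus (Plus m n) t)"
    by (rule Plus_assoc)
  finally show ?thesis
    unfolding absorbs_def .
qed

lemma absorbs_PlusR: "absorbs n t \<Longrightarrow> absorbs (Plus m n) t"
  by (meson absorbs_derivable_left absorbs_PlusL Plus_commute)

lemma absorbs_Pre: "absorbs m t \<Longrightarrow> absorbs (Pre b m) (Pre b t)"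
  unfolding absorbs_def by (meson Pre_Plus derivable.cpre derivable.trans)

lemma absorbs_funpow_Pre: "absorbs m t \<Longrightarrow> absorbs ((Pre b ^^ k) m) ((Pre b ^^ k) t)"
  by (induction k) (simp_all add: absorbs_Pre)

lemma absorbs_antisym: "absorbs m n \<Longrightarrow> absorbs n m \<Longrightarrow> derivable E m n"
  unfolding absorbs_def by (meson derivable.sym derivable.trans Plus_commute)

end

locale unary_monitor_axioms = monitor_axioms +
  fixes a :: 'a
  assumes single_action: "(UNIV :: 'a set) = {a}"
    and V1_mem: "(vx, Plus vx (Pre a vx)) \<in> E"
begin

lemma action_eq: "b = a"
  using single_action by blast

lemma absorbs_Pre_self: "absorbs t (Pre a t)"
  unfolding absorbs_def using derivable.subst[OF derivable.ax[OF V1_mem], of "\<lambda>_. t"] by simp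

lemma absorbs_funpow_Pre_self: "absorbs t ((Pre a ^^ j) t)"
proof (induction j)
  case 0
  show ?case by (simp add: absorbs_refl)
next
  case (Suc j)
  then show ?case
    using absorbs_trans[OF absorbs_Pre_self absorbs_Pre] by simp
qed

lemma absorbs_funpow_Pre_mono:
  assumes "k \<le> j"
  shows "absorbs ((Pre a ^^ k) u) ((Pre a ^^ j) u)"
proof -
  obtain i where "j = k + i"
    using le_iff_add assms by blast
  then have "(Pre a ^^ j) u = (Pre a ^^ k) ((Pre a ^^ i) u)"
    by (simp add: funpow_add)
  then show ?thesis
    using absorbs_funpow_Pre[OF absorbs_funpow_Pre_self] by simp
qed

lemma occurs_at_absorbs: "occurs_at m d u \<Longrightarrow> absorbs m ((Pre a ^^ d) u)"
proof (induction rule: occurs_at.induct)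
  case (Pre m d u b)
  then show ?case
    using absorbs_Pre[of m _ a] action_eq[of b] by simp
qed (simp_all add: absorbs_refl absorbs_PlusL absorbs_PlusR)

lemma occurs_upto_absorbs: "occurs_upto m k u \<Longrightarrow> absorbs m ((Pre a ^^ k) u)"
  unfolding occurs_upto_def
  using absorbs_trans[OF occurs_at_absorbs absorbs_funpow_Pre_mono] by blast

lemma covers_absorbs:
  assumes "covers m k u"
  shows "absorbs m ((Pre a ^^ k) u)"
  using assms unfolding covers_def
proof (elim disjE conjE)
  assume "u = Verd End"
  then show ?thesis
    using absorbs_derivable_right[OF funpow_Pre_End absorbs_End] by simp
next
  assume "occurs_upto m k u"
  then show ?thesis
    by (rule occurs_upto_absorbs)
next
  assume "occurs_upto m k (Verd Yes)" "occurs_upto m k (Verd No)"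
  then have "absorbs m (Plus ((Pre a ^^ k) (Verd Yes)) ((Pre a ^^ k) (Verd No)))"
    by (intro absorbs_Plus occurs_upto_absorbs)
  then have "absorbs m ((Pre a ^^ k) (Plus (Verd Yes) (Verd No)))"
    by (rule absorbs_derivable_right[OF funpow_Pre_Plus])
  moreover have "absorbs ((Pre a ^^ k) (Plus (Verd Yes) (Verd No))) ((Pre a ^^ k) u)"
    by (rule absorbs_funpow_Pre) (unfold absorbs_def, rule Yes_No_absorbs)
  ultimately show ?thesis
    by (rule absorbs_trans)
qed

lemma covers_imp_absorbs_funpow:
  "(\<And>d u. occurs_at n d u \<Longrightarrow> covers m (k + d) u) \<Longrightarrow> absorbs m ((Pre a ^^ k) n)"
proof (induction n arbitrary: k)
  case (Verd v)
  then show ?case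
    using covers_absorbs occurs_at.Verd by fastforce
next
  case (Var x)
  then show ?case
    using covers_absorbs occurs_at.Var by fastforce
next
  case (Pre b n)
  have "absorbs m ((Pre a ^^ Suc k) n)"
  proof (rule Pre.IH)
    fix d u
    assume "occurs_at n d u"
    then show "covers m (Suc k + d) u"
      using Pre.prems[of "Suc d" u] by simp
  qed
  then show ?case
    using action_eq[of b] by (simp add: funpow_swap1)
next
  case (Plus n\<^sub>1 n\<^sub>2)
  then have "absorbs m (Plus ((Pre a ^^ k) n\<^sub>1) ((Pre a ^^ k) n\<^sub>2))"
    by (simp add: absorbs_Plus)
  then show ?case
    by (rule absorbs_derivable_right[OF funpow_Pre_Plus])
qed

lemma mon_equiv_imp_derivable:
  assumes "mon_equiv m n"
  shows "derivable E m n"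
proof (rule absorbs_antisym)
  show "absorbs m n"
    using covers_imp_absorbs_funpow[where k = 0] mon_equiv_covers[OF single_action assms] by simp
  show "absorbs n m"
    using covers_imp_absorbs_funpow[where k = 0] mon_equiv_covers[OF single_action mon_equiv_sym[OF assms]]
    by simp
qed

end

theorem mainTheorem16:
  fixes a :: 'a and m n :: "'a mon"
  assumes "(UNIV :: 'a set) = {a}"
    and "mon_equiv m n"
  shows "derivable (Ev1' a) m n"
proof -
  interpret unary_monitor_axioms "Ev1' a" a
    using assms(1) by unfold_locales (auto simp: Ev1'_def)
  show ?thesis
    using assms(2) by (rule mon_equiv_imp_derivable)
qed

end
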